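(* Let $\pi$ be an irreducible permutation on $\mathcal{A}$ and let $v_1',v_2',v_3',v_4'\in\mathbb{Z}^{\mathcal{A}}$ satisfy $$\big(|\langle v_i',v_j'\rangle|\big)_{i,j=1}^4=\begin{pmatrix}0&0&0&1\\0&0&1&1\\0&1&0&1\\1&1&1&0\end{pmatrix}.$$ Then $T_{v_1'+v_2'}^2,\ T_{v_1'-v_2'}^2,\ T_{v_1'+v_3'}^2,\ T_{v_1'-v_3'}^2\in G_{\{v_1',v_2',v_3',v_4'\}}$.
   Context: $\mathcal{A}$ is a finite alphabet, $\pi=(\pi_{\mathrm t},\pi_{\mathrm b})$ a pair of bijections $\mathcal{A}\to\{1,\dots,|\mathcal{A}|\}$. $(\Omega_\pi)_{\alpha\beta}=+1$ if $\pi_{\mathrm t}(\alpha)<\pi_{\mathrm t}(\beta)$ and $\pi_{\mathrm b}(\alpha)>\pi_{\mathrm b}(\beta)$, $-1$ if $\pi_{\mathrm t}(\alpha)>\pi_{\mathrm t}(\beta)$ and $\pi_{\mathrm b}(\alpha)<\pi_{\mathrm b}(\beta)$, $0$ otherwise; $\langle u,v\rangle=u\Omega_\pi v^{\intercal}$ on $\mathbb{Z}^{\mathcal{A}}$ (identified with $H_1(M_\pi\setminus\Sigma_\pi;\mathbb{Z})$). For $v\in\mathbb{Z}^{\mathcal{A}}$ the symplectic transvection is $T_v(u)=u+\langle v,u\rangle v$. For a set $V\subseteq\mathbb{Z}^{\mathcal{A}}$, $G_V$ is the group generated by $\{T_v\}_{v\in V}$. *)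

theory Defs
  imports Main "HOL-Library.Function_Algebras"
begin

definition is_perm :: "('a::finite \<Rightarrow> nat) \<Rightarrow> ('a \<Rightarrow> nat) \<Rightarrow> bool" where
  "is_perm pt pb \<longleftrightarrow> bij_betw pt UNIV {1..card (UNIV::'a set)} \<and> bij_betw pb UNIV {1..card (UNIV::'a set)}"

definition irreducible_perm :: "('a::finite \<Rightarrow> nat) \<Rightarrow> ('a \<Rightarrow> nat) \<Rightarrow> bool" where
  "irreducible_perm pt pb \<longleftrightarrow> is_perm pt pb \<and>
     (\<forall>k. 1 \<le> k \<and> k < card (UNIV::'a set) \<longrightarrow> {a. pt a \<le> k} \<noteq> {a. pb a \<le> k})"

definition Omega :: "('a \<Rightarrow> nat) \<Rightarrow> ('a \<Rightarrow> nat) \<Rightarrow> 'a \<Rightarrow> 'a \<Rightarrow> int" where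
  "Omega pt pb \<alpha> \<beta> =
     (if pt \<alpha> < pt \<beta> \<and> pb \<alpha> > pb \<beta> then 1
      else if pt \<alpha> > pt \<beta> \<and> pb \<alpha> < pb \<beta> then -1 else 0)"

definition sform :: "('a::finite \<Rightarrow> nat) \<Rightarrow> ('a \<Rightarrow> nat) \<Rightarrow> ('a \<Rightarrow> int) \<Rightarrow> ('a \<Rightarrow> int) \<Rightarrow> int" where
  "sform pt pb u v = (\<Sum>\<alpha>\<in>UNIV. \<Sum>\<beta>\<in>UNIV. u \<alpha> * Omega pt pb \<alpha> \<beta> * v \<beta>)"

definition transvection :: "('a::finite \<Rightarrow> nat) \<Rightarrow> ('a \<Rightarrow> nat) \<Rightarrow> ('a \<Rightarrow> int) \<Rightarrow> ('a \<Rightarrow> int) \<Rightarrow> ('a \<Rightarrow> int)" where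
  "transvection pt pb v u = (\<lambda>\<alpha>. u \<alpha> + sform pt pb v u * v \<alpha>)"

inductive_set transv_group :: "('a::finite \<Rightarrow> nat) \<Rightarrow> ('a \<Rightarrow> nat) \<Rightarrow> ('a \<Rightarrow> int) set
    \<Rightarrow> (('a \<Rightarrow> int) \<Rightarrow> ('a \<Rightarrow> int)) set"
  for pt pb V where
  id_in: "id \<in> transv_group pt pb V"
| gen: "v \<in> V \<Longrightarrow> g \<in> transv_group pt pb V \<Longrightarrow> transvection pt pb v \<circ> g \<in> transv_group pt pb V"
| gen_inv: "v \<in> V \<Longrightarrow> g \<in> transv_group pt pb V \<Longrightarrow> inv (transvection pt pb v) \<circ> g \<in> transv_group pt pb V"

end

theory Submission
  imports Defs
begin

text \<open>Write \<open>T\<^sub>w\<^sup>k u = u + k\<langle>w,u\<rangle>w\<close> and call \<open>w\<close> a root of \<open>G\<close> if every power \<open>T\<^sub>w\<^sup>k\<close> lies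
  in \<open>G\<close>. Since \<open>T\<^sub>w\<^sup>k T\<^sub>v\<^sup>m T\<^sub>w\<^sup>-\<^sup>k = T\<^bsub>T\<^sub>w\<^sup>k v\<^esub>\<^sup>m\<close>, roots are closed under the transvections
  of roots; when \<open>|\<langle>w,v\<rangle>| = 1\<close> this gives every \<open>v + m w\<close>. If \<open>\<langle>r,s\<rangle> = 0\<close>, then
  \<open>T\<^sub>r\<^sup>2 = T\<^bsub>r+s\<^esub> T\<^bsub>r-s\<^esub> T\<^sub>s\<^sup>-\<^sup>2\<close>, so \<open>T\<^sub>r\<^sup>2 \<in> G\<close> as soon as \<open>s\<close> and \<open>r \<plusminus> s\<close> are roots. For
  \<open>r = v\<^sub>1 \<plusminus> v\<^sub>2\<close> (symmetrically \<open>v\<^sub>1 \<plusminus> v\<^sub>3\<close>) such an \<open>s\<close> is obtained from \<open>v\<^sub>4\<close> by adding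
  multiples of the generators.\<close>

text \<open>Deleting these from the simpset keeps scalars \<open>of_int c\<close> atomic, so that the linearity
  rules for \<^const>\<open>sform\<close> below apply.\<close>
lemmas of_int_distribs = of_int_add of_int_diff of_int_minus of_int_mult

lemma of_int_fun_apply [simp]: "(of_int k :: 'a \<Rightarrow> 'b::ring_1) x = of_int k"
  by (cases k rule: int_cases) (simp_all del: of_nat_Suc)

lemma sform_add_left [simp]: "sform pt pb (x + y) z = sform pt pb x z + sform pt pb y z"
  unfolding sform_def by (simp add: algebra_simps sum.distrib)

lemma sform_add_right [simp]: "sform pt pb z (x + y) = sform pt pb z x + sform pt pb z y"
  unfolding sform_def by (simp add: algebra_simps sum.distrib)

lemma sform_uminus_left [simp]: "sform pt pb (- x) z = - sform pt pb x z"
  unfolding sform_def by (simp add: sum_negf)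

lemma sform_uminus_right [simp]: "sform pt pb z (- x) = - sform pt pb z x"
  unfolding sform_def by (simp add: sum_negf)

lemma sform_diff_left [simp]: "sform pt pb (x - y) z = sform pt pb x z - sform pt pb y z"
  by (simp only: diff_conv_add_uminus sform_add_left sform_uminus_left)

lemma sform_diff_right [simp]: "sform pt pb z (x - y) = sform pt pb z x - sform pt pb z y"
  by (simp only: diff_conv_add_uminus sform_add_right sform_uminus_right)

lemma sform_scale_left [simp]: "sform pt pb (of_int k * x) z = k * sform pt pb x z"
  unfolding sform_def by (simp add: sum_distrib_left mult.assoc)

lemma sform_scale_right [simp]: "sform pt pb z (of_int k * x) = k * sform pt pb z x"
  unfolding sform_def by (simp add: sum_distrib_left algebra_simps)

lemma Omega_antisym: "Omega pt pb \<beta> \<alpha> = - Omega pt pb \<alpha> \<beta>"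
  by (auto simp: Omega_def)

lemma sform_antisym: "sform pt pb y x = - sform pt pb x y"
  unfolding sform_def
  by (subst sum.swap, subst (2) Omega_antisym) (simp add: sum_negf algebra_simps)

lemma sform_self [simp]: "sform pt pb x x = 0"
  using sform_antisym[of pt pb x x] by simp

definition transv_pow :: "('a::finite \<Rightarrow> nat) \<Rightarrow> ('a \<Rightarrow> nat) \<Rightarrow> int \<Rightarrow> ('a \<Rightarrow> int)
    \<Rightarrow> ('a \<Rightarrow> int) \<Rightarrow> ('a \<Rightarrow> int)" where
  "transv_pow pt pb k w u = u + of_int (k * sform pt pb w u) * w"

lemma transvection_eq_transv_pow: "transvection pt pb v = transv_pow pt pb 1 v"
  unfolding transvection_def transv_pow_def by (simp add: fun_eq_iff)

lemma transv_pow_zero: "transv_pow pt pb 0 w = id"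
  unfolding transv_pow_def by auto

lemma transv_pow_add: "transv_pow pt pb k w \<circ> transv_pow pt pb m w = transv_pow pt pb (k + m) w"
  unfolding transv_pow_def by (simp add: fun_eq_iff del: of_int_distribs) (simp add: algebra_simps)

lemma transv_pow_uminus: "transv_pow pt pb k (- w) = transv_pow pt pb k w"
  unfolding transv_pow_def by (simp add: fun_eq_iff)

lemma transv_pow_conj:
  "transv_pow pt pb k w \<circ> transv_pow pt pb m v \<circ> transv_pow pt pb (- k) w
     = transv_pow pt pb m (transv_pow pt pb k w v)"
  unfolding transv_pow_def
  by (simp add: fun_eq_iff sform_antisym[of pt pb v w] del: of_int_distribs) (simp add: algebra_simps)

lemma inv_transvection: "inv (transvection pt pb v) = transv_pow pt pb (- 1) v"
  unfolding transvection_eq_transv_pow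
  by (rule inv_unique_comp) (simp_all add: transv_pow_add transv_pow_zero)

lemma transv_group_comp:
  "g \<in> transv_group pt pb V \<Longrightarrow> h \<in> transv_group pt pb V \<Longrightarrow> g \<circ> h \<in> transv_group pt pb V"
  by (induction g rule: transv_group.induct)
     (auto simp: o_assoc[symmetric] intro: transv_group.intros)

definition transv_roots :: "('a::finite \<Rightarrow> nat) \<Rightarrow> ('a \<Rightarrow> nat) \<Rightarrow> ('a \<Rightarrow> int) set
    \<Rightarrow> ('a \<Rightarrow> int) set" where
  "transv_roots pt pb V = {w. \<forall>k. transv_pow pt pb k w \<in> transv_group pt pb V}"

lemma generator_in_transv_roots:
  assumes "v \<in> V"
  shows "v \<in> transv_roots pt pb V"
  unfolding transv_roots_def
proof (intro CollectI allI)
  fix k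
  have plus: "transv_pow pt pb 1 v \<in> transv_group pt pb V"
    using transv_group.gen[OF assms transv_group.id_in] by (simp add: transvection_eq_transv_pow)
  have minus: "transv_pow pt pb (- 1) v \<in> transv_group pt pb V"
    using transv_group.gen_inv[OF assms transv_group.id_in] by (simp add: inv_transvection)
  show "transv_pow pt pb k v \<in> transv_group pt pb V"
  proof (induction k rule: int_induct[where k = 0])
    case base
    show ?case by (simp only: transv_pow_zero transv_group.id_in)
  next
    case (step1 i)
    then show ?case
      using transv_group_comp[OF plus step1(2)] by (simp add: transv_pow_add add.commute)
  next
    case (step2 i)
    then show ?case
      using transv_group_comp[OF minus step2(2)] by (simp add: transv_pow_add)
  qed
qed

lemma uminus_in_transv_roots: "w \<in> transv_roots pt pb V \<Longrightarrow> - w \<in> transv_roots pt pb V"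
  unfolding transv_roots_def by (simp add: transv_pow_uminus)

lemma transv_pow_in_transv_roots:
  assumes "v \<in> transv_roots pt pb V" "w \<in> transv_roots pt pb V"
  shows "transv_pow pt pb k w v \<in> transv_roots pt pb V"
  using assms unfolding transv_roots_def
  by (auto simp: transv_pow_conj[symmetric] intro!: transv_group_comp)

lemma add_multiple_in_transv_roots:
  assumes "v \<in> transv_roots pt pb V" "w \<in> transv_roots pt pb V" "\<bar>sform pt pb w v\<bar> = 1"
  shows "v + of_int m * w \<in> transv_roots pt pb V"
proof -
  define \<epsilon> where "\<epsilon> = sform pt pb w v"
  have "\<epsilon> * \<epsilon> = 1"
    using assms(3) unfolding \<epsilon>_def by (metis abs_mult_self_eq mult_1_right)
  then have "transv_pow pt pb (m * \<epsilon>) w v = v + of_int m * w"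
    unfolding transv_pow_def \<epsilon>_def[symmetric] by (simp add: mult.assoc)
  then show ?thesis
    using transv_pow_in_transv_roots[OF assms(1,2)] by metis
qed

lemma transvection_square_eq:
  assumes "sform pt pb r s = 0"
  shows "transvection pt pb r \<circ> transvection pt pb r
    = transvection pt pb (r + s) \<circ> transvection pt pb (r - s) \<circ> transv_pow pt pb (- 2) s"
  using assms sform_antisym[of pt pb s r]
  unfolding transvection_eq_transv_pow transv_pow_def
  by (simp add: fun_eq_iff del: of_int_distribs) (simp add: algebra_simps)

lemma transvection_square_in_transv_group:
  assumes "sform pt pb r s = 0"
    and "r + s \<in> transv_roots pt pb V" "r - s \<in> transv_roots pt pb V" "s \<in> transv_roots pt pb V"
  shows "transvection pt pb r \<circ> transvection pt pb r \<in> transv_group pt pb V"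
  using assms(2-4) unfolding transvection_square_eq[OF assms(1)] transv_roots_def
  by (auto simp: transvection_eq_transv_pow intro!: transv_group_comp)

lemma transvection_sum_square_in_transv_group:
  assumes roots: "a \<in> transv_roots pt pb V" "b \<in> transv_roots pt pb V"
      "c \<in> transv_roots pt pb V" "d \<in> transv_roots pt pb V"
    and ab: "sform pt pb a b = 0" and ac: "sform pt pb a c = 0"
    and bc: "\<bar>sform pt pb b c\<bar> = 1" and ad: "\<bar>sform pt pb a d\<bar> = 1"
    and cd: "\<bar>sform pt pb c d\<bar> = 1"
  shows "transvection pt pb (a + b) \<circ> transvection pt pb (a + b) \<in> transv_group pt pb V"
proof -
  define x where "x = sform pt pb b c"
  define y where "y = sform pt pb a d"
  \<comment> \<open>the multiple of \<open>c\<close> is chosen to make \<open>t\<close> orthogonal to \<open>a + b\<close>\<close>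
  define t where "t = d + of_int (- x * (y + sform pt pb b d)) * c"
  have "x * x = 1" "y * y = 1"
    using bc ad unfolding x_def y_def by (metis abs_mult_self_eq mult_1_right)+
  have t_root: "t \<in> transv_roots pt pb V"
    unfolding t_def by (rule add_multiple_in_transv_roots[OF roots(4,3) cd])
  have bt: "sform pt pb b t = - y"
  proof -
    have xx: "x * (x * k) = k" for k
      using \<open>x * x = 1\<close> by (metis mult.assoc mult_1)
    show ?thesis
      unfolding t_def by (simp del: of_int_distribs) (simp add: x_def[symmetric] algebra_simps xx)
  qed
  have at: "sform pt pb a t = y"
    unfolding t_def y_def by (simp add: ac del: of_int_distribs)
  have shifted_root: "a + of_int n * (t + of_int m * b) \<in> transv_roots pt pb V" for n m
  proof (rule add_multiple_in_transv_roots[OF roots(1)])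
    show "t + of_int m * b \<in> transv_roots pt pb V"
      using add_multiple_in_transv_roots[OF t_root roots(2)] bt ad
      by (simp add: y_def sform_antisym[of pt pb b t])
    show "\<bar>sform pt pb (t + of_int m * b) a\<bar> = 1"
      using at ad by (simp add: y_def sform_antisym[of pt pb t a] sform_antisym[of pt pb b a] ab)
  qed
  show ?thesis
  proof (rule transvection_square_in_transv_group[OF _ _ _ t_root])
    show "sform pt pb (a + b) t = 0"
      using at bt by simp
    show "a + b + t \<in> transv_roots pt pb V"
      using shifted_root[of 1 1] by (simp add: algebra_simps)
    show "a + b - t \<in> transv_roots pt pb V"
      using shifted_root[of "- 1" "- 1"] by (simp add: algebra_simps)
  qed
qed

theorem corollary2p10:
  fixes pt pb :: "'a::finite \<Rightarrow> nat" and v1 v2 v3 v4 :: "'a \<Rightarrow> int"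
  assumes "irreducible_perm pt pb"
    and "\<forall>i<4. \<forall>j<4. \<bar>sform pt pb ([v1, v2, v3, v4] ! i) ([v1, v2, v3, v4] ! j)\<bar>
           = [[0,0,0,1],[0,0,1,1],[0,1,0,1],[1,1,1,0::int]] ! i ! j"
  shows "transvection pt pb (v1 + v2) \<circ> transvection pt pb (v1 + v2) \<in> transv_group pt pb {v1, v2, v3, v4}
     \<and> transvection pt pb (v1 - v2) \<circ> transvection pt pb (v1 - v2) \<in> transv_group pt pb {v1, v2, v3, v4}
     \<and> transvection pt pb (v1 + v3) \<circ> transvection pt pb (v1 + v3) \<in> transv_group pt pb {v1, v2, v3, v4}
     \<and> transvection pt pb (v1 - v3) \<circ> transvection pt pb (v1 - v3) \<in> transv_group pt pb {v1, v2, v3, v4}"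
proof -
  let ?R = "transv_roots pt pb {v1, v2, v3, v4}"
  note gram = assms(2)[rule_format]
  have roots: "v1 \<in> ?R" "v2 \<in> ?R" "v3 \<in> ?R" "v4 \<in> ?R" "- v2 \<in> ?R" "- v3 \<in> ?R"
    by (auto intro: generator_in_transv_roots uminus_in_transv_roots)
  have "sform pt pb v1 v2 = 0" "sform pt pb v1 v3 = 0"
    using gram[of 0 1] gram[of 0 2] by simp_all
  moreover have "\<bar>sform pt pb v2 v3\<bar> = 1" "\<bar>sform pt pb v3 v2\<bar> = 1" "\<bar>sform pt pb v1 v4\<bar> = 1"
    "\<bar>sform pt pb v2 v4\<bar> = 1" "\<bar>sform pt pb v3 v4\<bar> = 1"
    using gram[of 1 2] gram[of 0 3] gram[of 1 3] gram[of 2 3] sform_antisym[of pt pb v3 v2]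
    by simp_all
  ultimately show ?thesis
    using transvection_sum_square_in_transv_group[OF roots(1,2,3,4)]
      transvection_sum_square_in_transv_group[OF roots(1,5,3,4)]
      transvection_sum_square_in_transv_group[OF roots(1,3,2,4)]
      transvection_sum_square_in_transv_group[OF roots(1,6,2,4)]
    by simp
qed

end
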